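(* Let $d\in\mathbb{N}$, $\mathbf{n},\mathbf{m}\in\mathbb{N}^d$ with $\mathbf{m}\ge\mathbf{n}$, and $\mathbf{0}\le\mathbf{w}\le\mathbf{n}-\mathbf{1}$. Let $\mathbf{x}_*\in\mathbb{C}^{\mathbf{n}}$ with $\operatorname{Im}(x_{*,\mathbf{w}})=0$ and set $\mathbf{y}=|\mathcal{F}\{\mathbf{x}_*\}|^2$ (so $f_{LS}(\mathbf{x}_*;\mathbf{y})=0$). For $\boldsymbol{\epsilon}\in\mathbb{C}^{\mathbf{n}}$ put $\boldsymbol{\mathcal{E}}=\mathcal{F}\{\boldsymbol{\epsilon}\}$, $\mathbf{X}_*=\mathcal{F}\{\mathbf{x}_*\}$, $\mathbf{R}=\operatorname{Re}(\boldsymbol{\mathcal{E}}\odot\overline{\mathbf{X}_*})\in\mathbb{R}^{\mathbf{m}}$, the Lyapunov candidate $V(\boldsymbol{\epsilon})=\tfrac12\|\boldsymbol{\epsilon}\|_2^2$, and $$\dot V(\boldsymbol{\epsilon})=\operatorname{Re}\bigl\langle \nabla V(\boldsymbol{\epsilon}),-\nabla f_{reg}(\mathbf{x}_*+\boldsymbol{\epsilon};\mathbf{y},1,\mathbf{w})\bigr\rangle=-\operatorname{Re}\bigl(\boldsymbol{\epsilon}^\dagger\,\nabla f_{reg}(\mathbf{x}_*+\boldsymbol{\epsilon};\mathbf{y},1,\mathbf{w})\bigr).$$ Then: (1) $V(\boldsymbol{\epsilon})\ge0$ for all $\boldsymbol{\epsilon}$, and (2) $V(\boldsymbol{\epsilon})=0$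 if and only if $\boldsymbol{\epsilon}=\mathbf{0}$; (3) for every $\boldsymbol{\epsilon}$ with $g(\boldsymbol{\epsilon}):=\|\boldsymbol{\mathcal{E}}\|_4^4-\sum_{\mathbf{k}}|\mathcal{E}_{\mathbf{k}}|^2|R_{\mathbf{k}}|<0$, one has $\dot V(\boldsymbol{\epsilon})<0$; (4) for any constants $0<\delta<1$ and $\alpha>0$, every $\boldsymbol{\epsilon}$ satisfying $\|\boldsymbol{\mathcal{E}}\|_4^4<\delta\sum_{\mathbf{k}}|\mathcal{E}_{\mathbf{k}}|^2|R_{\mathbf{k}}|$ and $\|\mathbf{R}\|_2^2>\alpha\|\boldsymbol{\epsilon}\|_2^2$ satisfies $$\dot V(\boldsymbol{\epsilon})\le-\frac{(1-\delta)(7+\delta)}{4}\,\alpha\,V(\boldsymbol{\epsilon}).$$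
   Context: Multi-index notation: $\mathbb{C}^{\mathbf{n}}=\mathbb{C}^{n_1\times\cdots\times n_d}$, inequalities between multi-indices componentwise, $M=\prod_i m_i$. $\mathcal{F}:\mathbb{C}^{\mathbf{n}}\to\mathbb{C}^{\mathbf{m}}$, $\mathcal{F}\{\mathbf{x}\}_{\mathbf{k}}=M^{-1/2}\sum_{\mathbf{0}\le\mathbf{i}\le\mathbf{n}-\mathbf{1}}x_{\mathbf{i}}e^{-2\pi j\sum_lk_li_l/m_l}$ ($\mathbf{0}\le\mathbf{k}<\mathbf{m}$, $j^2=-1$). Operations $|\cdot|$, $\overline{\cdot}$, $\operatorname{Re}$ are entrywise; $\odot$ is the entrywise product. $f_{LS}(\mathbf{x};\mathbf{y})=\tfrac14\||\mathcal{F}\{\mathbf{x}\}|^2-\mathbf{y}\|_2^2$, $f_{reg}(\mathbf{x};\mathbf{y},\lambda,\mathbf{w})=f_{LS}(\mathbf{x};\mathbf{y})+\tfrac\lambda2(\operatorname{Im}x_{\mathbf{w}})^2$. Gradients are real gradients under $\mathbb{C}^{\mathbf{n}}\cong\mathbb{R}^{2N}$ written as complex vectors, $\nabla f=\partial f/\partial\operatorname{Re}\mathbf{x}+j\,\partial f/\partial\operatorname{Im}\mathbf{x}$; thus $\nabla V(\boldsymbol{\epsilon})=\boldsymbol{\epsilon}$ and $\nabla f_{LS}(\mathbf{x})=\mathcal{F}^\dagger\{(|\mathcal{F}\{\mathbf{x}\}|^2-\mathbf{y})\odot\mathcal{F}\{\mathbf{x}\}\}$. *)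

theory Defs
  imports "HOL-Analysis.Analysis"
begin

text \<open>Multi-indices in N^d are lists of length d; arrays in C^n are functions
  on nat lists, only their values on the index box matter.\<close>

definition idx :: "nat \<Rightarrow> nat list \<Rightarrow> nat list set" where
  "idx d n = {i. length i = d \<and> (\<forall>l<d. i ! l < n ! l)}"

definition DFT :: "nat \<Rightarrow> nat list \<Rightarrow> nat list \<Rightarrow> (nat list \<Rightarrow> complex) \<Rightarrow> nat list \<Rightarrow> complex" where
  "DFT d n m x k = complex_of_real (1 / sqrt (real (prod_list m))) *
     (\<Sum>i\<in>idx d n. x i * exp (- 2 * pi * \<i> *
        complex_of_real (\<Sum>l<d. real (k ! l) * real (i ! l) / real (m ! l))))"

definition f_LS :: "nat \<Rightarrow> nat list \<Rightarrow> nat list \<Rightarrow> (nat list \<Rightarrow> complex) \<Rightarrow> (nat list \<Rightarrow> real) \<Rightarrow> real" where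
  "f_LS d n m x y = 1/4 * (\<Sum>k\<in>idx d m. ((cmod (DFT d n m x k))\<^sup>2 - y k)\<^sup>2)"

definition f_reg :: "nat \<Rightarrow> nat list \<Rightarrow> nat list \<Rightarrow> (nat list \<Rightarrow> complex) \<Rightarrow> (nat list \<Rightarrow> real)
    \<Rightarrow> real \<Rightarrow> nat list \<Rightarrow> real" where
  "f_reg d n m x y lam w = f_LS d n m x y + lam / 2 * (Im (x w))\<^sup>2"

text \<open>Real gradient under C^n = R^(2N), written as a complex vector:
  grad f x at i = df/dRe x_i + j df/dIm x_i.\<close>
definition real_grad :: "((nat list \<Rightarrow> complex) \<Rightarrow> real) \<Rightarrow> (nat list \<Rightarrow> complex) \<Rightarrow> nat list \<Rightarrow> complex" where
  "real_grad f x i =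
     complex_of_real (deriv (\<lambda>t::real. f (x(i := x i + complex_of_real t))) 0) +
     \<i> * complex_of_real (deriv (\<lambda>t::real. f (x(i := x i + \<i> * complex_of_real t))) 0)"

definition sqnorm2 :: "nat list set \<Rightarrow> (nat list \<Rightarrow> complex) \<Rightarrow> real" where
  "sqnorm2 I x = (\<Sum>i\<in>I. (cmod (x i))\<^sup>2)"

definition Lyap :: "nat \<Rightarrow> nat list \<Rightarrow> (nat list \<Rightarrow> complex) \<Rightarrow> real" where
  "Lyap d n \<epsilon> = 1/2 * sqnorm2 (idx d n) \<epsilon>"

definition Lyap_dot :: "nat \<Rightarrow> nat list \<Rightarrow> nat list \<Rightarrow> (nat list \<Rightarrow> complex) \<Rightarrow> nat list
    \<Rightarrow> (nat list \<Rightarrow> complex) \<Rightarrow> real" where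
  "Lyap_dot d n m xs w \<epsilon> =
     (let y = (\<lambda>k. (cmod (DFT d n m xs k))\<^sup>2) in
      - Re (\<Sum>i\<in>idx d n. cnj (\<epsilon> i) *
             real_grad (\<lambda>x. f_reg d n m x y 1 w) (\<lambda>i. xs i + \<epsilon> i) i))"

end

theory Submission
  imports Defs
begin

text \<open>The real gradient of the least-squares term is the adjoint DFT of
  (|F x|^2 - y) \<odot> F x, so pairing it with \<epsilon> gives, with E = F \<epsilon> and
  R = Re (E \<odot> cnj X),
  \<open>-Lyap_dot = \<Sum>k (|X+E|^2 - |X|^2) Re (E cnj (X+E)) + (Im \<epsilon>_w)^2
             = \<Sum>k (2R + |E|^2) (R + |E|^2) + (Im \<epsilon>_w)^2\<close>.
  Each summand is at least |E|^2 |R| - |E|^4, and, for 0 < \<delta> < 1, at least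
  (1-\<delta>)(7+\<delta>)/8 R^2 + \<delta> |E|^2 |R| - |E|^4; both follow by completing a
  square separately for R \<ge> 0 and R < 0.  Summing gives the two decay estimates.\<close>

lemma finite_idx: "finite (idx d n)"
proof -
  let ?B = "\<Sum>l<d. n ! l"
  have "idx d n \<subseteq> {i. set i \<subseteq> {..<?B} \<and> length i = d}"
  proof (rule subsetI, rule CollectI, rule conjI)
    fix i assume i: "i \<in> idx d n"
    then show "length i = d" by (simp add: idx_def)
    show "set i \<subseteq> {..<?B}"
    proof
      fix a assume "a \<in> set i"
      with i obtain l where l: "l < d" "i ! l = a" by (auto simp: idx_def in_set_conv_nth)
      have "n ! l \<le> ?B" by (rule member_le_sum) (use l in auto)
      with i l show "a \<in> {..<?B}" by (auto simp: idx_def)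
    qed
  qed
  then show ?thesis using finite_subset finite_lists_length_eq by blast
qed

definition dft_kernel :: "nat \<Rightarrow> nat list \<Rightarrow> nat list \<Rightarrow> nat list \<Rightarrow> complex" where
  "dft_kernel d m k i = complex_of_real (1 / sqrt (real (prod_list m))) * exp (- 2 * pi * \<i> *
        complex_of_real (\<Sum>l<d. real (k ! l) * real (i ! l) / real (m ! l)))"

lemma DFT_eq_sum_kernel: "DFT d n m v k = (\<Sum>i\<in>idx d n. v i * dft_kernel d m k i)"
  by (simp add: DFT_def dft_kernel_def sum_distrib_left mult_ac)

lemma DFT_add: "DFT d n m (\<lambda>j. x j + v j) k = DFT d n m x k + DFT d n m v k"
  by (simp add: DFT_eq_sum_kernel distrib_right sum.distrib)

lemma DFT_add_scaleR:
  "DFT d n m (\<lambda>j. x j + complex_of_real t * v j) k = DFT d n m x k + complex_of_real t * DFT d n m v k"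
  by (simp add: DFT_eq_sum_kernel algebra_simps sum.distrib sum_distrib_left)

lemma DFT_delta:
  assumes "i \<in> idx d n"
  shows "DFT d n m (\<lambda>j. if j = i then c else 0) k = c * dft_kernel d m k i"
proof -
  have "(if j = i then c else 0) * dft_kernel d m k j = (if j = i then c * dft_kernel d m k j else 0)"
    for j by simp
  with assms show ?thesis by (simp add: DFT_eq_sum_kernel finite_idx)
qed

lemma DFT_adjoint:
  "(\<Sum>i\<in>idx d n. cnj (\<epsilon> i) * (\<Sum>k\<in>idx d m. c k * cnj (dft_kernel d m k i)))
    = (\<Sum>k\<in>idx d m. c k * cnj (DFT d n m \<epsilon> k))"
proof -
  have "(\<Sum>i\<in>idx d n. cnj (\<epsilon> i) * (\<Sum>k\<in>idx d m. c k * cnj (dft_kernel d m k i)))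
    = (\<Sum>i\<in>idx d n. \<Sum>k\<in>idx d m. c k * cnj (\<epsilon> i * dft_kernel d m k i))"
    by (simp add: sum_distrib_left mult_ac)
  also have "\<dots> = (\<Sum>k\<in>idx d m. \<Sum>i\<in>idx d n. c k * cnj (\<epsilon> i * dft_kernel d m k i))"
    by (rule sum.swap)
  also have "\<dots> = (\<Sum>k\<in>idx d m. c k * cnj (DFT d n m \<epsilon> k))"
    by (simp add: DFT_eq_sum_kernel sum_distrib_left)
  finally show ?thesis .
qed

lemma cmod_add_scaleR_power2:
  "(cmod (A + complex_of_real t * B))\<^sup>2 = (cmod A)\<^sup>2 + 2 * t * Re (B * cnj A) + t\<^sup>2 * (cmod B)\<^sup>2"
  unfolding cmod_power2 by (simp add: power2_eq_square algebra_simps)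

lemma f_reg_directional_derivative:
  "((\<lambda>t. f_reg d n m (\<lambda>j. x j + complex_of_real t * v j) y lam w) has_real_derivative
     (\<Sum>k\<in>idx d m. ((cmod (DFT d n m x k))\<^sup>2 - y k) * Re (DFT d n m v k * cnj (DFT d n m x k)))
      + lam * Im (x w) * Im (v w)) (at 0)"
proof -
  have "(\<lambda>t. f_reg d n m (\<lambda>j. x j + complex_of_real t * v j) y lam w) =
    (\<lambda>t. 1/4 * (\<Sum>k\<in>idx d m. ((cmod (DFT d n m x k))\<^sup>2 + 2 * t * Re (DFT d n m v k * cnj (DFT d n m x k))
       + t\<^sup>2 * (cmod (DFT d n m v k))\<^sup>2 - y k)\<^sup>2) + lam / 2 * (Im (x w) + t * Im (v w))\<^sup>2)"
    (is "_ = ?g") by (simp add: f_reg_def f_LS_def DFT_add_scaleR cmod_add_scaleR_power2)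
  moreover have "(?g has_real_derivative
     (\<Sum>k\<in>idx d m. ((cmod (DFT d n m x k))\<^sup>2 - y k) * Re (DFT d n m v k * cnj (DFT d n m x k)))
      + lam * Im (x w) * Im (v w)) (at 0)"
    by (rule derivative_eq_intros refl | simp)+ (simp add: sum_distrib_left algebra_simps)
  ultimately show ?thesis by simp
qed

lemma real_grad_f_reg:
  assumes "i \<in> idx d n"
  shows "real_grad (\<lambda>x. f_reg d n m x y lam w) x i =
    (\<Sum>k\<in>idx d m. complex_of_real ((cmod (DFT d n m x k))\<^sup>2 - y k) * DFT d n m x k * cnj (dft_kernel d m k i))
    + \<i> * complex_of_real (lam * Im (x w)) * (if w = i then 1 else 0)"
proof -
  have "x(i := x i + c * complex_of_real t) = (\<lambda>j. x j + complex_of_real t * (if j = i then c else 0))"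
    for c t by (auto simp: fun_eq_iff)
  from this[of 1] this[of \<i>] show ?thesis
    unfolding real_grad_def
    by (simp add: DERIV_imp_deriv[OF f_reg_directional_derivative] DFT_delta[OF assms]
        complex_eq_iff Re_sum Im_sum sum_distrib_left algebra_simps)
qed

lemma Lyap_dot_eq:
  assumes "w \<in> idx d n"
  shows "Lyap_dot d n m xs w \<epsilon> =
    - (\<Sum>k\<in>idx d m. ((cmod (DFT d n m xs k + DFT d n m \<epsilon> k))\<^sup>2 - (cmod (DFT d n m xs k))\<^sup>2)
        * Re (DFT d n m \<epsilon> k * cnj (DFT d n m xs k + DFT d n m \<epsilon> k)))
    - Im (xs w + \<epsilon> w) * Im (\<epsilon> w)"
proof -
  define x where "x = (\<lambda>i. xs i + \<epsilon> i)"
  define c where "c k = complex_of_real ((cmod (DFT d n m x k))\<^sup>2 - (cmod (DFT d n m xs k))\<^sup>2) * DFT d n m x k" for k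
  have penalty: "(\<Sum>i\<in>idx d n. cnj (\<epsilon> i) * (\<i> * complex_of_real (Im (x w)) * (if w = i then 1 else 0)))
      = cnj (\<epsilon> w) * \<i> * complex_of_real (Im (x w))"
    using assms by (simp add: if_distrib finite_idx mult_ac cong: if_cong)
  have "Lyap_dot d n m xs w \<epsilon>
      = - Re (\<Sum>i\<in>idx d n. cnj (\<epsilon> i) * real_grad (\<lambda>x. f_reg d n m x (\<lambda>k. (cmod (DFT d n m xs k))\<^sup>2) 1 w) x i)"
    by (simp add: Lyap_dot_def Let_def x_def)
  also have "(\<Sum>i\<in>idx d n. cnj (\<epsilon> i) * real_grad (\<lambda>x. f_reg d n m x (\<lambda>k. (cmod (DFT d n m xs k))\<^sup>2) 1 w) x i)
      = (\<Sum>k\<in>idx d m. c k * cnj (DFT d n m \<epsilon> k)) + cnj (\<epsilon> w) * \<i> * complex_of_real (Im (x w))"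
    unfolding DFT_adjoint[symmetric] penalty[symmetric] c_def
    by (simp add: real_grad_f_reg distrib_left sum.distrib cong: sum.cong)
  finally show ?thesis
    by (simp add: c_def x_def DFT_add Re_sum algebra_simps)
qed

lemma cmod_add_power2_diff_mult_Re:
  "((cmod (X + E))\<^sup>2 - (cmod X)\<^sup>2) * Re (E * cnj (X + E))
   = (2 * Re (E * cnj X) + (cmod E)\<^sup>2) * (Re (E * cnj X) + (cmod E)\<^sup>2)"
  unfolding cmod_power2 by (simp add: algebra_simps power2_eq_square)

lemma Lyap_dot_eq_sum_quadratic:
  assumes "w \<in> idx d n" and "Im (xs w) = 0"
  shows "Lyap_dot d n m xs w \<epsilon> =
    - (\<Sum>k\<in>idx d m. (2 * Re (DFT d n m \<epsilon> k * cnj (DFT d n m xs k)) + (cmod (DFT d n m \<epsilon> k))\<^sup>2)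
        * (Re (DFT d n m \<epsilon> k * cnj (DFT d n m xs k)) + (cmod (DFT d n m \<epsilon> k))\<^sup>2))
    - (Im (\<epsilon> w))\<^sup>2"
  using Lyap_dot_eq[OF assms(1), of m xs \<epsilon>] assms(2)
  unfolding cmod_add_power2_diff_mult_Re by (simp add: power2_eq_square)

lemma add_mult_add_ge_abs:
  fixes R a :: real
  assumes "0 \<le> a"
  shows "a * \<bar>R\<bar> - a\<^sup>2 \<le> (2 * R + a) * (R + a)"
proof (cases "0 \<le> R")
  case True
  with assms show ?thesis by (simp add: algebra_simps power2_eq_square)
next
  case False
  then have "(2 * R + a) * (R + a) - (a * \<bar>R\<bar> - a\<^sup>2) = 2 * (\<bar>R\<bar> - a)\<^sup>2"
    by (simp add: algebra_simps power2_eq_square)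
  with zero_le_power2[of "\<bar>R\<bar> - a"] show ?thesis by linarith
qed

lemma add_mult_add_ge_delta:
  fixes R a \<delta> :: real
  assumes "0 \<le> a" and "0 < \<delta>" and "\<delta> < 1"
  shows "(1 - \<delta>) * (7 + \<delta>) / 8 * R\<^sup>2 + \<delta> * (a * \<bar>R\<bar>) - a\<^sup>2 \<le> (2 * R + a) * (R + a)"
proof (cases "0 \<le> R")
  case True
  have "(2 * R + a) * (R + a) - ((1 - \<delta>) * (7 + \<delta>) / 8 * R\<^sup>2 + \<delta> * (a * \<bar>R\<bar>) - a\<^sup>2)
     = (3 + \<delta>)\<^sup>2 / 8 * R\<^sup>2 + (3 - \<delta>) * (R * a) + 2 * a\<^sup>2"
    using True by (simp add: field_simps power2_eq_square)
  moreover have "0 \<le> (3 - \<delta>) * (R * a)" using True assms by simp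
  moreover have "0 \<le> (3 + \<delta>)\<^sup>2 / 8 * R\<^sup>2" by simp
  moreover have "0 \<le> 2 * a\<^sup>2" by simp
  ultimately show ?thesis by linarith
next
  case False
  then have "(2 * R + a) * (R + a) - ((1 - \<delta>) * (7 + \<delta>) / 8 * R\<^sup>2 + \<delta> * (a * \<bar>R\<bar>) - a\<^sup>2)
     = 2 * ((3 + \<delta>) * \<bar>R\<bar> / 4 - a)\<^sup>2"
    by (simp add: field_simps power2_eq_square)
  with zero_le_power2[of "(3 + \<delta>) * \<bar>R\<bar> / 4 - a"] show ?thesis by linarith
qed

lemma sum_add_mult_add_pos:
  fixes R a :: "'a \<Rightarrow> real"
  assumes "\<And>k. k \<in> K \<Longrightarrow> 0 \<le> a k" and "(\<Sum>k\<in>K. (a k)\<^sup>2) < (\<Sum>k\<in>K. a k * \<bar>R k\<bar>)"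
  shows "0 < (\<Sum>k\<in>K. (2 * R k + a k) * (R k + a k))"
proof -
  have "(\<Sum>k\<in>K. a k * \<bar>R k\<bar>) - (\<Sum>k\<in>K. (a k)\<^sup>2) \<le> (\<Sum>k\<in>K. (2 * R k + a k) * (R k + a k))"
    unfolding sum_subtractf[symmetric] by (rule sum_mono) (rule add_mult_add_ge_abs, rule assms)
  with assms(2) show ?thesis by linarith
qed

lemma sum_add_mult_add_ge:
  fixes R a :: "'a \<Rightarrow> real"
  assumes "\<And>k. k \<in> K \<Longrightarrow> 0 \<le> a k" and "0 < \<delta>" and "\<delta> < 1"
    and "(\<Sum>k\<in>K. (a k)\<^sup>2) < \<delta> * (\<Sum>k\<in>K. a k * \<bar>R k\<bar>)"
  shows "(1 - \<delta>) * (7 + \<delta>) / 8 * (\<Sum>k\<in>K. (R k)\<^sup>2) \<le> (\<Sum>k\<in>K. (2 * R k + a k) * (R k + a k))"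
proof -
  have "(1 - \<delta>) * (7 + \<delta>) / 8 * (\<Sum>k\<in>K. (R k)\<^sup>2) + \<delta> * (\<Sum>k\<in>K. a k * \<bar>R k\<bar>) - (\<Sum>k\<in>K. (a k)\<^sup>2)
      \<le> (\<Sum>k\<in>K. (2 * R k + a k) * (R k + a k))"
    unfolding sum_distrib_left sum.distrib[symmetric] sum_subtractf[symmetric]
    by (rule sum_mono) (rule add_mult_add_ge_delta, simp_all add: assms)
  with assms(4) show ?thesis by linarith
qed

lemma Lyap_nonneg: "0 \<le> Lyap d n \<epsilon>"
  by (simp add: Lyap_def sqnorm2_def sum_nonneg)

lemma Lyap_eq_0_iff: "Lyap d n \<epsilon> = 0 \<longleftrightarrow> (\<forall>i\<in>idx d n. \<epsilon> i = 0)"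
  by (simp add: Lyap_def sqnorm2_def sum_nonneg_eq_0_iff[OF finite_idx])

lemma Lyap_dot_neg:
  assumes "w \<in> idx d n" and "Im (xs w) = 0"
    and "(\<Sum>k\<in>idx d m. (cmod (DFT d n m \<epsilon> k)) ^ 4)
       < (\<Sum>k\<in>idx d m. (cmod (DFT d n m \<epsilon> k))\<^sup>2 * \<bar>Re (DFT d n m \<epsilon> k * cnj (DFT d n m xs k))\<bar>)"
  shows "Lyap_dot d n m xs w \<epsilon> < 0"
proof -
  have "0 < (\<Sum>k\<in>idx d m. (2 * Re (DFT d n m \<epsilon> k * cnj (DFT d n m xs k)) + (cmod (DFT d n m \<epsilon> k))\<^sup>2)
        * (Re (DFT d n m \<epsilon> k * cnj (DFT d n m xs k)) + (cmod (DFT d n m \<epsilon> k))\<^sup>2))"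
    by (rule sum_add_mult_add_pos) (use assms(3) in simp_all)
  then show ?thesis
    using Lyap_dot_eq_sum_quadratic[where xs = xs and m = m and \<epsilon> = \<epsilon>, OF assms(1,2)]
      zero_le_power2[of "Im (\<epsilon> w)"]
    by linarith
qed

lemma Lyap_dot_le:
  assumes "w \<in> idx d n" and "Im (xs w) = 0" and "0 < \<delta>" and "\<delta> < 1"
    and "(\<Sum>k\<in>idx d m. (cmod (DFT d n m \<epsilon> k)) ^ 4)
       < \<delta> * (\<Sum>k\<in>idx d m. (cmod (DFT d n m \<epsilon> k))\<^sup>2 * \<bar>Re (DFT d n m \<epsilon> k * cnj (DFT d n m xs k))\<bar>)"
    and "\<alpha> * sqnorm2 (idx d n) \<epsilon> < (\<Sum>k\<in>idx d m. (Re (DFT d n m \<epsilon> k * cnj (DFT d n m xs k)))\<^sup>2)"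
  shows "Lyap_dot d n m xs w \<epsilon> \<le> - ((1 - \<delta>) * (7 + \<delta>) / 4) * \<alpha> * Lyap d n \<epsilon>"
proof -
  let ?\<kappa> = "(1 - \<delta>) * (7 + \<delta>) / 8"
  have "?\<kappa> * (\<Sum>k\<in>idx d m. (Re (DFT d n m \<epsilon> k * cnj (DFT d n m xs k)))\<^sup>2)
     \<le> (\<Sum>k\<in>idx d m. (2 * Re (DFT d n m \<epsilon> k * cnj (DFT d n m xs k)) + (cmod (DFT d n m \<epsilon> k))\<^sup>2)
        * (Re (DFT d n m \<epsilon> k * cnj (DFT d n m xs k)) + (cmod (DFT d n m \<epsilon> k))\<^sup>2))"
    by (rule sum_add_mult_add_ge) (use assms(3,4,5) in simp_all)
  moreover have "?\<kappa> * (\<alpha> * sqnorm2 (idx d n) \<epsilon>)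
      \<le> ?\<kappa> * (\<Sum>k\<in>idx d m. (Re (DFT d n m \<epsilon> k * cnj (DFT d n m xs k)))\<^sup>2)"
    using assms(3,4,6) by (intro mult_left_mono) simp_all
  ultimately have "Lyap_dot d n m xs w \<epsilon> \<le> - (?\<kappa> * (\<alpha> * sqnorm2 (idx d n) \<epsilon>))"
    using Lyap_dot_eq_sum_quadratic[where xs = xs and m = m and \<epsilon> = \<epsilon>, OF assms(1,2)]
      zero_le_power2[of "Im (\<epsilon> w)"]
    by linarith
  then show ?thesis by (simp add: Lyap_def)
qed

theorem theorem3p2:
  fixes d :: nat and n m w :: "nat list" and xs :: "nat list \<Rightarrow> complex"
  assumes "length n = d" and "length m = d"
    and "\<forall>l<d. n ! l \<le> m ! l"
    and "w \<in> idx d n"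
    and "Im (xs w) = 0"
  defines "E \<equiv> \<lambda>\<epsilon>. DFT d n m \<epsilon>"
    and "X \<equiv> DFT d n m xs"
    and "R \<equiv> \<lambda>\<epsilon> k. Re (DFT d n m \<epsilon> k * cnj (DFT d n m xs k))"
  shows "(\<forall>\<epsilon>. Lyap d n \<epsilon> \<ge> 0)
    \<and> (\<forall>\<epsilon>. Lyap d n \<epsilon> = 0 \<longleftrightarrow> (\<forall>i\<in>idx d n. \<epsilon> i = 0))
    \<and> (\<forall>\<epsilon>. (\<Sum>k\<in>idx d m. (cmod (E \<epsilon> k)) ^ 4)
              - (\<Sum>k\<in>idx d m. (cmod (E \<epsilon> k))\<^sup>2 * \<bar>R \<epsilon> k\<bar>) < 0
           \<longrightarrow> Lyap_dot d n m xs w \<epsilon> < 0)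
    \<and> (\<forall>\<delta> \<alpha> :: real. 0 < \<delta> \<and> \<delta> < 1 \<and> \<alpha> > 0 \<longrightarrow>
        (\<forall>\<epsilon>. (\<Sum>k\<in>idx d m. (cmod (E \<epsilon> k)) ^ 4)
                 < \<delta> * (\<Sum>k\<in>idx d m. (cmod (E \<epsilon> k))\<^sup>2 * \<bar>R \<epsilon> k\<bar>)
              \<and> (\<Sum>k\<in>idx d m. (R \<epsilon> k)\<^sup>2) > \<alpha> * sqnorm2 (idx d n) \<epsilon>
              \<longrightarrow> Lyap_dot d n m xs w \<epsilon> \<le> - ((1 - \<delta>) * (7 + \<delta>) / 4) * \<alpha> * Lyap d n \<epsilon>))"
  unfolding E_def R_def
  using Lyap_nonneg Lyap_eq_0_iff
    Lyap_dot_neg[where xs = xs, OF assms(4,5)] Lyap_dot_le[where xs = xs, OF assms(4,5)]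
  by auto

end
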